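(* Let $0<p\le n$. Let $\mathbf{X}$ be a deterministic $n\times p$ matrix with $\mathbf{X}^T\mathbf{X}=\mathbf{I}_p$, let $\boldsymbol\beta_0=(\beta_1,0,\dots,0)^T$ with $\beta_1\neq0$, let $\mathbf{y}=\mathbf{X}\boldsymbol\beta_0+\boldsymbol\varepsilon$ with $\varepsilon_i$ i.i.d. $N(0,\sigma^2)$, and $\mathbf z=\mathbf X^T\mathbf y$. For $\lambda\ge0$ let $$L_p(\lambda)=\frac1n\Big(\beta_1-\operatorname{sgn}(z_1)(|z_1|-\lambda)_+\Big)^2+\frac1n\sum_{j=2}^p\big((|z_j|-\lambda)_+\big)^2,$$ and $L_p(\lambda_p^* )=\min_{\lambda\ge0}L_p(\lambda)$. If $\operatorname{sgn}(\beta_1)\neq\operatorname{sgn}(z_1)$, then $nL_p(\lambda_p^* )=\beta_1^2$.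
   Context: $(a)_+=\max(a,0)$; $\operatorname{sgn}$ is the sign function. $L_p(\lambda)$ is the $L_2$ loss $\|\mathbf X\boldsymbol\beta_0-\mathbf X\hat{\boldsymbol\beta}_\lambda\|^2/n$ of the Lasso estimate $\hat\beta_{\lambda j}=\operatorname{sgn}(z_j)(|z_j|-\lambda)_+$ under the orthonormal design (for $p=1$ the sum is empty). *)

theory Defs
  imports Complex_Main
begin

definition soft_thr :: "real \<Rightarrow> real \<Rightarrow> real" where
  "soft_thr lam z = sgn z * max (\<bar>z\<bar> - lam) 0"

text \<open>The loss L_p(lambda); vectors are indexed by 1..p.\<close>
definition lasso_loss :: "nat \<Rightarrow> nat \<Rightarrow> real \<Rightarrow> (nat \<Rightarrow> real) \<Rightarrow> real \<Rightarrow> real" where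
  "lasso_loss n p \<beta>1 z lam =
     (1 / real n) * (\<beta>1 - soft_thr lam (z 1))\<^sup>2
     + (1 / real n) * (\<Sum>j = 2..p. (max (\<bar>z j\<bar> - lam) 0)\<^sup>2)"

end

theory Submission
  imports Defs
begin

text \<open>A soft-thresholded estimate of \<open>z\<^sub>1\<close> has the sign of \<open>z\<^sub>1\<close> or vanishes, so when that sign
  differs from the sign of \<open>\<beta>\<^sub>1\<close> the first term of \<open>n L\<^sub>p(\<lambda>)\<close> is at least \<open>\<beta>\<^sub>1\<^sup>2\<close> and all
  others are nonnegative. The bound is attained by every \<open>\<lambda> \<ge> max\<^sub>j |z\<^sub>j|\<close>, which kills
  all estimates.\<close>

lemma mult_soft_thr_nonpos:
  assumes "sgn a \<noteq> sgn z"
  shows "a * soft_thr lam z \<le> 0"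
proof -
  have "a * sgn z \<le> 0"
    using assms by (auto simp: sgn_if split: if_splits)
  then show ?thesis
    unfolding soft_thr_def
    by (metis mult.assoc mult_nonpos_nonneg max.cobounded2)
qed

lemma soft_thr_eq_0: "\<bar>z\<bar> \<le> lam \<Longrightarrow> soft_thr lam z = 0"
  unfolding soft_thr_def by simp

lemma sq_le_sq_diff_soft_thr:
  assumes "sgn a \<noteq> sgn z"
  shows "a\<^sup>2 \<le> (a - soft_thr lam z)\<^sup>2"
proof -
  have "(a - soft_thr lam z)\<^sup>2 = a\<^sup>2 - 2 * (a * soft_thr lam z) + (soft_thr lam z)\<^sup>2"
    by (simp add: power2_eq_square algebra_simps)
  then show ?thesis
    using mult_soft_thr_nonpos[OF assms, of lam] by (smt (verit) zero_le_power2)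
qed

lemma lasso_loss_lower_bound:
  assumes "0 < n" and "sgn \<beta>1 \<noteq> sgn (z 1)"
  shows "\<beta>1\<^sup>2 \<le> real n * lasso_loss n p \<beta>1 z lam"
proof -
  have "0 \<le> (\<Sum>j = 2..p. (max (\<bar>z j\<bar> - lam) 0)\<^sup>2)"
    by (simp add: sum_nonneg)
  then show ?thesis
    using sq_le_sq_diff_soft_thr[OF assms(2), of lam] assms(1)
    unfolding lasso_loss_def by (simp add: algebra_simps)
qed

lemma lasso_loss_above_max:
  assumes "0 < n" and "0 < p" and "\<And>j. j \<in> {1..p} \<Longrightarrow> \<bar>z j\<bar> \<le> lam"
  shows "real n * lasso_loss n p \<beta>1 z lam = \<beta>1\<^sup>2"
proof -
  have "soft_thr lam (z 1) = 0"
    using assms(2,3) by (intro soft_thr_eq_0) auto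
  moreover have "(\<Sum>j = 2..p. (max (\<bar>z j\<bar> - lam) 0)\<^sup>2) = 0"
    using assms(3) by (intro sum.neutral) auto
  ultimately show ?thesis
    using assms(1) unfolding lasso_loss_def by simp
qed

theorem lemma2p1:
  fixes n p :: nat and X :: "nat \<Rightarrow> nat \<Rightarrow> real" and \<beta>1 :: real
    and \<beta>0 \<epsilon> y z :: "nat \<Rightarrow> real" and lam_star :: real
  assumes "0 < p" and "p \<le> n"
    and orth: "\<forall>j\<in>{1..p}. \<forall>k\<in>{1..p}.
                 (\<Sum>i = 1..n. X i j * X i k) = (if j = k then 1 else 0)"
    and "\<beta>1 \<noteq> 0"
    and beta0: "\<forall>j. \<beta>0 j = (if j = 1 then \<beta>1 else 0)"
    and ydef: "\<forall>i. y i = (\<Sum>j = 1..p. X i j * \<beta>0 j) + \<epsilon> i"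
    and zdef: "\<forall>j. z j = (\<Sum>i = 1..n. X i j * y i)"
    and "lam_star \<ge> 0"
    and minim: "\<forall>lam \<ge> 0. lasso_loss n p \<beta>1 z lam_star \<le> lasso_loss n p \<beta>1 z lam"
    and "sgn \<beta>1 \<noteq> sgn (z 1)"
  shows "real n * lasso_loss n p \<beta>1 z lam_star = \<beta>1\<^sup>2"
proof -
  have "0 < n" using assms(1,2) by simp
  define M where "M = (\<Sum>j = 1..p. \<bar>z j\<bar>)"
  have "0 \<le> M" unfolding M_def by (simp add: sum_nonneg)
  have "\<bar>z j\<bar> \<le> M" if "j \<in> {1..p}" for j
    unfolding M_def using that by (intro member_le_sum) auto
  then have "real n * lasso_loss n p \<beta>1 z M = \<beta>1\<^sup>2"
    using \<open>0 < n\<close> \<open>0 < p\<close> lasso_loss_above_max by blast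
  moreover have "lasso_loss n p \<beta>1 z lam_star \<le> lasso_loss n p \<beta>1 z M"
    using minim \<open>0 \<le> M\<close> by blast
  ultimately have "real n * lasso_loss n p \<beta>1 z lam_star \<le> \<beta>1\<^sup>2"
    by (metis mult_left_mono of_nat_0_le_iff)
  moreover have "\<beta>1\<^sup>2 \<le> real n * lasso_loss n p \<beta>1 z lam_star"
    using \<open>0 < n\<close> \<open>sgn \<beta>1 \<noteq> sgn (z 1)\<close> by (rule lasso_loss_lower_bound)
  ultimately show ?thesis by (rule order_antisym)
qed

end
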